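(* Let $S$ be a semigroup with finite $\mathcal{R}$-height, and let $B$ be a bi-ideal of $S$. Then $\mathrm{H}_{\mathcal{R}}(B)\leq 3\,\mathrm{H}_{\mathcal{R}}(S)-1$.
   Context: For a semigroup $S$, $S^1$ denotes $S$ with an identity adjoined if necessary. Green's preorder: $a\leq_{\mathcal{R}} b$ iff $aS^1\subseteq bS^1$; $\mathcal{R}$ is the associated equivalence; the $\mathcal{R}$-height $\mathrm{H}_{\mathcal{R}}$ of a semigroup is the supremum of the cardinalities of chains in its poset of $\mathcal{R}$-classes. A bi-ideal of $S$ is a non-empty subset $B$ with $BS^1B\subseteq B$; $\mathrm{H}_{\mathcal{R}}(B)$ is computed in the semigroup $B$ itself. *)

theory Defs
  imports Main "HOL-Library.Extended_Nat"
begin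

text \<open>Green's R-preorder computed inside a subsemigroup A (of an ambient semigroup type):
  a \<le>R b iff a \<in> b A^1, i.e. a = b or a = b x for some x in A.\<close>
definition R_le :: "'a::semigroup_mult set \<Rightarrow> 'a \<Rightarrow> 'a \<Rightarrow> bool" where
  "R_le A a b \<longleftrightarrow> a = b \<or> (\<exists>x\<in>A. a = b * x)"

definition R_equiv :: "'a::semigroup_mult set \<Rightarrow> 'a \<Rightarrow> 'a \<Rightarrow> bool" where
  "R_equiv A a b \<longleftrightarrow> R_le A a b \<and> R_le A b a"

definition R_class :: "'a::semigroup_mult set \<Rightarrow> 'a \<Rightarrow> 'a set" where
  "R_class A a = {b\<in>A. R_equiv A a b}"

definition R_classes :: "'a::semigroup_mult set \<Rightarrow> 'a set set" where
  "R_classes A = R_class A ` A"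

definition R_class_le :: "'a::semigroup_mult set \<Rightarrow> 'a set \<Rightarrow> 'a set \<Rightarrow> bool" where
  "R_class_le A X Y \<longleftrightarrow> (\<exists>a\<in>X. \<exists>b\<in>Y. R_le A a b)"

definition R_chain :: "'a::semigroup_mult set \<Rightarrow> 'a set set \<Rightarrow> bool" where
  "R_chain A K \<longleftrightarrow> K \<subseteq> R_classes A \<and>
     (\<forall>X\<in>K. \<forall>Y\<in>K. R_class_le A X Y \<or> R_class_le A Y X)"

definition R_height :: "'a::semigroup_mult set \<Rightarrow> enat" where
  "R_height A = Sup {(if finite K then enat (card K) else \<infinity>) | K. R_chain A K}"

definition bi_ideal :: "'a::semigroup_mult set \<Rightarrow> 'a set \<Rightarrow> bool" where
  "bi_ideal S B \<longleftrightarrow> B \<noteq> {} \<and> B \<subseteq> S \<and>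
     (\<forall>b\<in>B. \<forall>c\<in>B. b * c \<in> B \<and> (\<forall>s\<in>S. b * s * c \<in> B))"

end

theory Submission
  imports Defs
begin

(* Since B S^1 B \<subseteq> B, for x, z \<in> B every element of c z S^1 x lies in c B. Take
   representatives of a finite chain of R-classes of B; their R-classes in S form a chain, so
   there are at most n = H_R(S) of them. If four representatives a >_B p >_B q >_B d lay in one
   R-class of S, then p = a x and d = q z with x, z \<in> B and a \<in> d S^1 = q z S^1, so p \<in> q B,
   which is impossible; hence each R-class of S contains at most three representatives. If the
   R-class in S of the lowest representative is minimal in S, it contains at most two: for
   a >_B b >_B d there, write b = a x and d = b y, and minimality gives a \<in> d S^1 = d y S^1.
   Otherwise an element strictly R-below it in S extends the chain of R-classes of S, so that
   chain has at most n - 1 classes. Either way there are at most 3n - 1 representatives. *)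

definition subsemigroup :: "'a::semigroup_mult set \<Rightarrow> bool" where
  "subsemigroup A \<longleftrightarrow> (\<forall>x\<in>A. \<forall>y\<in>A. x * y \<in> A)"

lemma subsemigroup_UNIV [simp]: "subsemigroup UNIV"
  by (simp add: subsemigroup_def)

lemma bi_ideal_subsemigroup: "bi_ideal S B \<Longrightarrow> subsemigroup B"
  by (simp add: bi_ideal_def subsemigroup_def)

lemma R_le_refl [simp]: "R_le A a a"
  by (simp add: R_le_def)

lemma R_le_trans:
  assumes "subsemigroup A" "R_le A a b" "R_le A b c"
  shows "R_le A a c"
  using assms unfolding R_le_def subsemigroup_def
  by (elim disjE bexE; simp add: mult.assoc; blast)

lemma R_le_UNIV: "R_le A a b \<Longrightarrow> R_le UNIV a b"
  unfolding R_le_def by blast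

lemma mem_R_class: "a \<in> A \<Longrightarrow> a \<in> R_class A a"
  by (simp add: R_class_def R_equiv_def)

lemma R_le_if_mem_R_class:
  assumes "subsemigroup A" "a \<in> R_class A c" "b \<in> R_class A c"
  shows "R_le A a b"
  using assms R_le_trans unfolding R_class_def R_equiv_def by blast

lemma R_class_eq_if_R_equiv:
  assumes "subsemigroup A" "R_equiv A a b"
  shows "R_class A a = R_class A b"
  using assms R_le_trans unfolding R_class_def R_equiv_def by blast

lemma R_chain_subset: "R_chain A K \<Longrightarrow> K' \<subseteq> K \<Longrightarrow> R_chain A K'"
  unfolding R_chain_def by blast

lemma R_chain_R_class_image:
  assumes "X \<subseteq> A" "\<forall>x\<in>X. \<forall>y\<in>X. R_le A x y \<or> R_le A y x"
  shows "R_chain A (R_class A ` X)"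
  unfolding R_chain_def R_classes_def R_class_le_def
  using assms mem_R_class[of _ A] by blast

lemma enat_card_le_R_height: "R_chain A K \<Longrightarrow> finite K \<Longrightarrow> enat (card K) \<le> R_height A"
  unfolding R_height_def by (rule Sup_upper) force

lemma R_height_le_enatI:
  assumes "\<And>K. R_chain A K \<Longrightarrow> finite K \<Longrightarrow> card K \<le> n"
  shows "R_height A \<le> enat n"
  unfolding R_height_def
proof (rule Sup_least)
  fix x assume "x \<in> {if finite K then enat (card K) else \<infinity> | K. R_chain A K}"
  then obtain K where K: "R_chain A K" and x: "x = (if finite K then enat (card K) else \<infinity>)"
    by blast
  show "x \<le> enat n"
  proof (cases "finite K")
    case True
    then show ?thesis using assms[OF K] x by simp
  next
    case False
    then obtain K' where K': "finite K'" "card K' = Suc n" "K' \<subseteq> K"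
      using infinite_arbitrarily_large by blast
    then show ?thesis using assms[OF R_chain_subset[OF K K'(3)] K'(1)] by simp
  qed
qed

definition R_elem_chain :: "'a::semigroup_mult set \<Rightarrow> 'a set \<Rightarrow> bool" where
  "R_elem_chain A E \<longleftrightarrow> E \<subseteq> A \<and>
     (\<forall>x\<in>E. \<forall>y\<in>E. R_le A x y \<or> R_le A y x) \<and>
     (\<forall>x\<in>E. \<forall>y\<in>E. R_le A x y \<longrightarrow> R_le A y x \<longrightarrow> x = y)"

lemma R_elem_chain_subset: "R_elem_chain A E \<Longrightarrow> F \<subseteq> E \<Longrightarrow> R_elem_chain A F"
  unfolding R_elem_chain_def by blast

lemma R_chain_has_R_elem_chain:
  assumes A: "subsemigroup A" and K: "R_chain A K"
  shows "\<exists>E. R_elem_chain A E \<and> bij_betw (R_class A) E K"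
proof -
  have "\<forall>X\<in>K. \<exists>a. a \<in> A \<and> R_class A a = X"
    using K by (auto simp: R_chain_def R_classes_def)
  then obtain rep where rep: "\<And>X. X \<in> K \<Longrightarrow> rep X \<in> A" "\<And>X. X \<in> K \<Longrightarrow> R_class A (rep X) = X"
    by metis
  have R_le_rep: "R_le A (rep X) (rep Y)" if XY: "X \<in> K" "Y \<in> K" "R_class_le A X Y" for X Y
  proof -
    obtain a b where "a \<in> X" "b \<in> Y" "R_le A a b"
      using XY(3) by (auto simp: R_class_le_def)
    then have "R_le A (rep X) a" "R_le A a b" "R_le A b (rep Y)"
      using rep(2)[OF XY(1)] rep(2)[OF XY(2)] by (auto simp: R_class_def R_equiv_def)
    then show ?thesis by (blast intro: R_le_trans[OF A])
  qed
  have "R_elem_chain A (rep ` K)"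
    unfolding R_elem_chain_def
  proof (intro conjI ballI impI)
    show "rep ` K \<subseteq> A" using rep(1) by blast
  next
    fix x y assume "x \<in> rep ` K" "y \<in> rep ` K"
    then obtain X Y where XY: "X \<in> K" "Y \<in> K" "x = rep X" "y = rep Y" by blast
    then have "R_class_le A X Y \<or> R_class_le A Y X" using K unfolding R_chain_def by blast
    then show "R_le A x y \<or> R_le A y x" using R_le_rep XY by blast
    assume "R_le A x y" "R_le A y x"
    then have "R_equiv A x y" by (simp add: R_equiv_def)
    then have "R_class A x = R_class A y" by (rule R_class_eq_if_R_equiv[OF A])
    then show "x = y" using rep(2) XY by simp
  qed
  moreover have "bij_betw (R_class A) (rep ` K) K"
  proof (rule bij_betw_imageI)
    show "inj_on (R_class A) (rep ` K)"
      using rep(2) by (fastforce intro: inj_onI)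
    show "R_class A ` rep ` K = K"
      using rep(2) by (simp add: image_image)
  qed
  ultimately show ?thesis by blast
qed

lemma R_elem_chain_has_greatest_least:
  assumes A: "subsemigroup A" and E: "R_elem_chain A E" and fin: "finite E" and ne: "E \<noteq> {}"
  obtains a d where "a \<in> E" "\<forall>x\<in>E. R_le A x a" "d \<in> E" "\<forall>x\<in>E. R_le A d x"
proof -
  define less where "less x y \<longleftrightarrow> R_le A x y \<and> x \<noteq> y" for x y
  have total: "\<forall>x\<in>E. \<forall>y\<in>E. R_le A x y \<or> R_le A y x"
    and antisym: "\<forall>x\<in>E. \<forall>y\<in>E. R_le A x y \<longrightarrow> R_le A y x \<longrightarrow> x = y"
    using E unfolding R_elem_chain_def by blast+
  have asym: "asymp_on E less"
    using antisym unfolding asymp_on_def less_def by blast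
  have trans: "transp_on E less"
    using antisym R_le_trans[OF A] unfolding transp_on_def less_def by blast
  obtain a where a: "a \<in> E" "\<forall>x\<in>E. x \<noteq> a \<longrightarrow> \<not> less a x"
    using Finite_Set.bex_max_element[OF fin asym trans ne] by blast
  obtain d where d: "d \<in> E" "\<forall>x\<in>E. x \<noteq> d \<longrightarrow> \<not> less x d"
    using Finite_Set.bex_min_element[OF fin asym trans ne] by blast
  have "\<forall>x\<in>E. R_le A x a" "\<forall>x\<in>E. R_le A d x"
    using a d total unfolding less_def by (metis R_le_refl)+
  then show thesis using that a(1) d(1) by blast
qed

lemma R_le_properE:
  assumes "R_le A b a" "b \<noteq> a"
  obtains x where "x \<in> A" "b = a * x"
  using assms unfolding R_le_def by blast

lemma R_le_bi_ideal_sandwich: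
  assumes B: "bi_ideal UNIV B" and x: "x \<in> B" and z: "z \<in> B" and "R_le UNIV a (c * z)"
  shows "R_le B (a * x) c"
proof -
  consider "a = c * z" | s where "a = c * z * s"
    using assms(4) unfolding R_le_def by blast
  then obtain w where "w \<in> B" "a * x = c * w"
  proof cases
    case 1
    then show thesis using that[of "z * x"] B x z by (simp add: bi_ideal_def mult.assoc)
  next
    case (2 s)
    then show thesis using that[of "z * s * x"] B x z by (simp add: bi_ideal_def mult.assoc)
  qed
  then show ?thesis unfolding R_le_def by blast
qed

lemma card_le_card_Diff2: "card F \<le> card (F - {a, b}) + 2"
proof -
  have "card {a, b} \<le> 2" by (simp add: card_insert_if)
  then show ?thesis using diff_card_le_card_Diff[of "{a, b}" F] by simp
qed

lemma card_R_elem_chain_in_R_class_le_3: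
  assumes B: "bi_ideal UNIV B" and F: "R_elem_chain B F" and F_sub: "F \<subseteq> R_class UNIV c"
  shows "card F \<le> 3"
proof (cases "finite F \<and> F \<noteq> {}")
  case False
  then show ?thesis by auto
next
  case True
  obtain a d where a: "a \<in> F" "\<forall>x\<in>F. R_le B x a" and d: "d \<in> F" "\<forall>x\<in>F. R_le B d x"
    using R_elem_chain_has_greatest_least[OF bi_ideal_subsemigroup[OF B] F] True by metis
  have "p = q" if p: "p \<in> F - {a, d}" and q: "q \<in> F - {a, d}" and "R_le B q p" for p q
  proof -
    obtain x where "x \<in> B" "p = a * x"
      using R_le_properE[of B p a] a(2) p by blast
    obtain z where "z \<in> B" "d = q * z"
      using R_le_properE[of B d q] d(2) q by blast
    moreover have "R_le UNIV a d"
      using F_sub a(1) d(1) R_le_if_mem_R_class[OF subsemigroup_UNIV] by blast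
    ultimately have "R_le B p q"
      using R_le_bi_ideal_sandwich[OF B] \<open>x \<in> B\<close> \<open>p = a * x\<close> by blast
    then show "p = q"
      using F p q \<open>R_le B q p\<close> unfolding R_elem_chain_def by blast
  qed
  then have "\<forall>p\<in>F - {a, d}. \<forall>q\<in>F - {a, d}. p = q"
    using F unfolding R_elem_chain_def by blast
  then have "card (F - {a, d}) \<le> Suc 0"
    using True card_le_Suc0_iff_eq[of "F - {a, d}"] by blast
  then show ?thesis
    using card_le_card_Diff2[of F a d] by linarith
qed

lemma card_R_elem_chain_in_minimal_R_class_le_2:
  assumes B: "bi_ideal UNIV B" and F: "R_elem_chain B F" and F_sub: "F \<subseteq> R_class UNIV c"
    and minimal: "\<And>v. R_le UNIV v c \<Longrightarrow> R_le UNIV c v"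
  shows "card F \<le> 2"
proof (cases "finite F \<and> F \<noteq> {}")
  case False
  then show ?thesis by auto
next
  case True
  obtain a d where a: "a \<in> F" "\<forall>x\<in>F. R_le B x a" and d: "d \<in> F" "\<forall>x\<in>F. R_le B d x"
    using R_elem_chain_has_greatest_least[OF bi_ideal_subsemigroup[OF B] F] True by metis
  have "F - {a, d} = {}"
  proof (rule equals0I)
    fix b assume b: "b \<in> F - {a, d}"
    obtain x where "x \<in> B" "b = a * x"
      using R_le_properE[of B b a] a(2) b by blast
    obtain y where "y \<in> B" "d = b * y"
      using R_le_properE[of B d b] d(2) b by blast
    have "R_le UNIV (d * y) d" "R_le UNIV d c" "R_le UNIV a c"
      using F_sub a(1) d(1) by (auto simp: R_le_def R_class_def R_equiv_def)
    then have "R_le UNIV a (d * y)"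
      using minimal R_le_trans[OF subsemigroup_UNIV] by metis
    then have "R_le B b d"
      using R_le_bi_ideal_sandwich[OF B \<open>x \<in> B\<close> \<open>y \<in> B\<close>] \<open>b = a * x\<close> by simp
    then show False
      using F b d unfolding R_elem_chain_def by blast
  qed
  then have "card (F - {a, d}) = 0" by (simp only: card.empty)
  then show ?thesis
    using card_le_card_Diff2[of F a d] by linarith
qed

lemma card_le_sum_fibre_bounds:
  assumes "finite A" and "\<And>y. y \<in> f ` A \<Longrightarrow> card {x \<in> A. f x = y} \<le> k y"
  shows "card A \<le> sum k (f ` A)"
proof -
  have "card A = (\<Sum>y\<in>f ` A. card {x \<in> A. f x = y})"
    using sum.image_gen[OF assms(1), of "\<lambda>_. 1 :: nat" f] by simp
  also have "\<dots> \<le> sum k (f ` A)"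
    using assms(2) by (rule sum_mono)
  finally show ?thesis .
qed

lemma card_R_class_image_le_R_height:
  assumes "X \<subseteq> A" "finite X" "\<forall>x\<in>X. \<forall>y\<in>X. R_le A x y \<or> R_le A y x"
    and "R_height A \<le> enat n"
  shows "card (R_class A ` X) \<le> n"
proof -
  have "enat (card (R_class A ` X)) \<le> R_height A"
    using enat_card_le_R_height[OF R_chain_R_class_image] assms(1-3) by blast
  also note assms(4)
  finally show ?thesis by simp
qed

lemma card_R_elem_chain_le_3_card_R_classes:
  assumes B: "bi_ideal UNIV B" and E: "R_elem_chain B E" "finite E"
  shows "card E \<le> 3 * card (R_class UNIV ` E)"
proof -
  have "card E \<le> (\<Sum>C\<in>R_class UNIV ` E. 3)"
  proof (rule card_le_sum_fibre_bounds[OF E(2)])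
    fix C assume "C \<in> R_class UNIV ` E"
    then obtain e where "C = R_class UNIV e" by blast
    then have "{x \<in> E. R_class UNIV x = C} \<subseteq> R_class UNIV e"
      using mem_R_class[of _ UNIV] by auto
    moreover have "R_elem_chain B {x \<in> E. R_class UNIV x = C}"
      by (rule R_elem_chain_subset[OF E(1)]) auto
    ultimately show "card {x \<in> E. R_class UNIV x = C} \<le> 3"
      using card_R_elem_chain_in_R_class_le_3[OF B] by simp
  qed
  then show ?thesis by simp
qed

lemma card_R_elem_chain_less_3_card_R_classes:
  fixes B :: "'a::semigroup_mult set"
  assumes B: "bi_ideal UNIV B" and E: "R_elem_chain B E" "finite E" and "m \<in> E"
    and minimal: "\<And>v. R_le UNIV v m \<Longrightarrow> R_le UNIV m v"
  shows "card E < 3 * card (R_class UNIV ` E)"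
proof -
  let ?cls = "R_class (UNIV :: 'a set)"
  have "card E \<le> (\<Sum>C\<in>?cls ` E. if C = ?cls m then 2 else 3)"
  proof (rule card_le_sum_fibre_bounds[OF E(2)])
    fix C assume "C \<in> ?cls ` E"
    then obtain e where "C = ?cls e" by blast
    then have F_sub: "{x \<in> E. ?cls x = C} \<subseteq> ?cls e"
      using mem_R_class[of _ UNIV] by auto
    have F: "R_elem_chain B {x \<in> E. ?cls x = C}"
      by (rule R_elem_chain_subset[OF E(1)]) auto
    show "card {x \<in> E. ?cls x = C} \<le> (if C = ?cls m then 2 else 3)"
      using F_sub card_R_elem_chain_in_R_class_le_3[OF B F]
        card_R_elem_chain_in_minimal_R_class_le_2[OF B F _ minimal] \<open>C = ?cls e\<close>
      by auto
  qed
  also have "\<dots> = 2 + 3 * (card (?cls ` E) - 1)"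
    using \<open>m \<in> E\<close> E(2)
    by (simp add: sum.remove[of "?cls ` E" "?cls m"] sum.cong[of "?cls ` E - {?cls m}" _ _ "\<lambda>_. 3"])
  finally show ?thesis
    using \<open>m \<in> E\<close> E(2) card_gt_0_iff[of "?cls ` E"] by auto
qed

lemma card_R_elem_chain_le_R_height:
  fixes B :: "'a::semigroup_mult set"
  assumes B: "bi_ideal UNIV B" and E: "R_elem_chain B E" "finite E"
    and height: "R_height (UNIV :: 'a set) \<le> enat n"
  shows "card E \<le> 3 * n - 1"
proof (cases "E = {}")
  case True
  then show ?thesis by simp
next
  case False
  let ?cls = "R_class (UNIV :: 'a set)"
  have E_total: "\<forall>x\<in>E. \<forall>y\<in>E. R_le UNIV x y \<or> R_le UNIV y x"
    using E(1) R_le_UNIV[of B] unfolding R_elem_chain_def by blast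
  have "card (?cls ` E) \<le> n"
    using card_R_class_image_le_R_height[OF _ E(2) E_total height] by simp
  obtain m where m: "m \<in> E" "\<forall>x\<in>E. R_le B m x"
    using R_elem_chain_has_greatest_least[OF bi_ideal_subsemigroup[OF B] E False] by metis
  show ?thesis
  proof (cases "\<forall>v. R_le UNIV v m \<longrightarrow> R_le UNIV m v")
    case True
    then have "card E < 3 * card (?cls ` E)"
      using card_R_elem_chain_less_3_card_R_classes[OF B E m(1)] by blast
    with \<open>card (?cls ` E) \<le> n\<close> show ?thesis by linarith
  next
    case False
    then obtain v where v: "R_le UNIV v m" "\<not> R_le UNIV m v" by blast
    have v_below: "R_le UNIV v x" if "x \<in> E" for x
      using R_le_trans[OF subsemigroup_UNIV v(1) R_le_UNIV[of B]] m(2) that by blast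
    have "?cls v \<notin> ?cls ` E"
    proof
      assume "?cls v \<in> ?cls ` E"
      then obtain e where "e \<in> E" "e \<in> ?cls v"
        using mem_R_class[of _ UNIV] by auto
      then have "R_le UNIV m e" "R_le UNIV e v"
        using m R_le_UNIV[of B] by (auto simp: R_class_def R_equiv_def)
      then show False
        using v(2) R_le_trans[OF subsemigroup_UNIV] by blast
    qed
    moreover have "card (?cls ` insert v E) \<le> n"
      using E(2) E_total v_below
      by (intro card_R_class_image_le_R_height[OF _ _ _ height]) auto
    ultimately have "card (?cls ` E) + 1 \<le> n"
      using E(2) by simp
    with card_R_elem_chain_le_3_card_R_classes[OF B E] show ?thesis by linarith
  qed
qed

theorem corollary3p2:
  fixes B :: "'a::semigroup_mult set"
  assumes "R_height (UNIV :: 'a set) < \<infinity>"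
    and "bi_ideal (UNIV :: 'a set) B"
  shows "R_height B \<le> 3 * R_height (UNIV :: 'a set) - 1"
proof -
  obtain n where n: "R_height (UNIV :: 'a set) = enat n"
    using assms(1) by (cases "R_height (UNIV :: 'a set)") auto
  have "R_height B \<le> enat (3 * n - 1)"
  proof (rule R_height_le_enatI)
    fix K assume "R_chain B K" "finite K"
    then obtain E where "R_elem_chain B E" "bij_betw (R_class B) E K"
      using R_chain_has_R_elem_chain[OF bi_ideal_subsemigroup[OF assms(2)]] by blast
    then show "card K \<le> 3 * n - 1"
      using card_R_elem_chain_le_R_height[OF assms(2)] n \<open>finite K\<close>
      by (metis bij_betw_finite bij_betw_same_card order_refl)
  qed
  also have "enat (3 * n - 1) = 3 * R_height (UNIV :: 'a set) - 1"
    unfolding n by (simp add: numeral_eq_enat one_enat_def)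
  finally show ?thesis .
qed

end
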